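(* Let $s\ge 1$ and let $n_1,\dots,n_s,k_1,\dots,k_s$ be positive integers. Then there exist finitely many polynomials $g_i\in\mathbb{Q}[X]$ and positive integers $m_i,\ell_i$ with $\ell_i\le n_1+\cdots+n_s$ for every $i$, such that $$\frac{1}{(X^{k_1}-1)^{n_1}\cdots(X^{k_s}-1)^{n_s}}=\sum_{i}\frac{g_i}{(X^{m_i}-1)^{\ell_i}}$$ in the field of rational functions $\mathbb{Q}(X)$. *)

theory Defs
  imports "HOL-Computational_Algebra.Polynomial" "HOL-Computational_Algebra.Fraction_Field"
begin

end

theory Submission
  imports Defs
begin

text \<open>All the factors \<open>X\<^sup>k\<^sub>j - 1\<close> divide \<open>X\<^sup>M - 1\<close> for \<open>M = k\<^sub>1 \<cdots> k\<^sub>s\<close>, so the whole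
  denominator divides \<open>(X\<^sup>M - 1)\<^sup>N\<close> with \<open>N = n\<^sub>1 + \<dots> + n\<^sub>s\<close>. Expanding the fraction by the
  cofactor gives the required decomposition with a single summand.\<close>

lemma monom_1_minus_1_dvd:
  assumes "k dvd m"
  shows "monom (1::'a::comm_ring_1) k - 1 dvd monom 1 m - 1"
proof -
  obtain t where "m = k * t" using assms by (elim dvdE)
  then have "monom (1::'a) m = monom 1 k ^ t" by (simp add: monom_power)
  then show ?thesis by (simp add: power_diff_1_eq[of "monom 1 k" t])
qed

lemma monom_1_minus_1_nonzero:
  assumes "m > 0"
  shows "monom (1::'a::comm_ring_1) m - 1 \<noteq> 0"
proof
  assume "monom (1::'a) m - 1 = 0"
  then have "coeff (monom (1::'a) m - 1) m = 0" by simp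
  with assms show False by simp
qed

lemma prod_power_dvd_power_sum:
  fixes a :: "'i \<Rightarrow> 'a::comm_semiring_1"
  assumes "\<And>j. j \<in> I \<Longrightarrow> a j dvd b"
  shows "(\<Prod>j\<in>I. a j ^ n j) dvd b ^ (\<Sum>j\<in>I. n j)"
proof -
  have "(\<Prod>j\<in>I. a j ^ n j) dvd (\<Prod>j\<in>I. b ^ n j)"
    by (intro prod_dvd_prod) (simp add: assms dvd_power_same)
  then show ?thesis by (simp add: power_sum)
qed

lemma Fract_1_eq_Fract_cofactor:
  assumes "d = p * q" and "d \<noteq> 0"
  shows "Fract 1 p = Fract q d"
  using assms by (simp add: eq_fract mult.commute)

theorem lemma2p1:
  fixes s :: nat and n k :: "nat \<Rightarrow> nat"
  assumes "s \<ge> 1"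
    and "\<forall>j<s. n j > 0" and "\<forall>j<s. k j > 0"
  shows "\<exists>(r::nat) (g :: nat \<Rightarrow> rat poly) (m :: nat \<Rightarrow> nat) (l :: nat \<Rightarrow> nat).
           (\<forall>i<r. m i > 0 \<and> l i > 0 \<and> l i \<le> (\<Sum>j<s. n j)) \<and>
           Fract 1 (\<Prod>j<s. (monom 1 (k j) - 1) ^ n j)
             = (\<Sum>i<r. Fract (g i) ((monom 1 (m i) - 1) ^ l i))"
proof -
  define M where "M = (\<Prod>j<s. k j)"
  define N where "N = (\<Sum>j<s. n j)"
  define D :: "rat poly" where "D = (monom 1 M - 1) ^ N"
  have "M > 0" unfolding M_def using assms(3) by (simp add: prod_pos)
  have "N > 0" unfolding N_def using assms(1,2) by (intro sum_pos2[where i=0]) auto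
  have "D \<noteq> 0" unfolding D_def by (intro power_not_zero monom_1_minus_1_nonzero \<open>M > 0\<close>)
  have "(\<Prod>j<s. (monom 1 (k j) - 1) ^ n j) dvd D"
    unfolding D_def N_def M_def
    by (intro prod_power_dvd_power_sum monom_1_minus_1_dvd) (simp add: dvd_prodI)
  then obtain Q where "D = (\<Prod>j<s. (monom 1 (k j) - 1) ^ n j) * Q" by (elim dvdE)
  then have decomposition: "Fract 1 (\<Prod>j<s. (monom 1 (k j) - 1) ^ n j) = Fract Q D"
    using \<open>D \<noteq> 0\<close> by (rule Fract_1_eq_Fract_cofactor)
  show ?thesis
    by (rule exI[of _ 1], rule exI[of _ "\<lambda>_. Q"], rule exI[of _ "\<lambda>_. M"],
        rule exI[of _ "\<lambda>_. N"])
      (simp add: decomposition D_def N_def[symmetric] \<open>M > 0\<close> \<open>N > 0\<close>)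
qed

end
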